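(* The interior (in $\mathfrak a$) of the closure $\overline{\mathfrak a^+_{\mathfrak u}}$ is $\mathfrak a^+_{\mathfrak u}$.
   Context: $\mathfrak h$ is the Lie algebra of a connected semisimple real Lie group $H$ without compact factors; $P$ an absolutely proper parabolic subgroup of $H$ (projection to each simple factor not surjective), $\mathfrak u$ the Lie algebra of its unipotent radical, $\mathfrak a$ the Lie algebra of a maximal connected $\operatorname{Ad}$-diagonalizable subgroup of $P$. $\Phi(\mathfrak u)\subset\mathfrak a^*$ is the set of roots of $\mathfrak a$ on $\mathfrak u$; for $\alpha\in\mathfrak a^*$, $s_\alpha\in\mathfrak a$ satisfies $\mathbf B(s_\alpha,s)=\alpha(s)$ for all $s\in\mathfrak a$, $\mathbf B$ the Killing form; $\mathfrak a^+_{\mathfrak u}=\{\sum_{\alpha\in\Phi(\mathfrak u)}t_\alpha s_\alpha:t_\alpha>0 \text{ for all } \alpha\}$. *)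

theory Defs
  imports "HOL-Analysis.Analysis"
begin

text \<open>A finite-dimensional real Lie algebra is modelled as a Euclidean space type
  (the Euclidean structure is only used as a finite-dimensional topology/basis)
  together with a bracket \<open>br\<close>.\<close>

definition lie_algebra :: "('a::euclidean_space \<Rightarrow> 'a \<Rightarrow> 'a) \<Rightarrow> bool" where
  "lie_algebra br \<longleftrightarrow> bilinear br \<and> (\<forall>x. br x x = 0) \<and>
     (\<forall>x y z. br x (br y z) + br y (br z x) + br z (br x y) = 0)"

definition ltrace :: "('a::euclidean_space \<Rightarrow> 'a) \<Rightarrow> real" where
  "ltrace f = (\<Sum>b\<in>Basis. f b \<bullet> b)"

definition killing :: "('a::euclidean_space \<Rightarrow> 'a \<Rightarrow> 'a) \<Rightarrow> 'a \<Rightarrow> 'a \<Rightarrow> real" where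
  "killing br x y = ltrace (br x \<circ> br y)"

definition semisimple :: "('a::euclidean_space \<Rightarrow> 'a \<Rightarrow> 'a) \<Rightarrow> bool" where
  "semisimple br \<longleftrightarrow> lie_algebra br \<and> (\<forall>x. (\<forall>y. killing br x y = 0) \<longrightarrow> x = 0)"

definition lie_subalgebra :: "('a::euclidean_space \<Rightarrow> 'a \<Rightarrow> 'a) \<Rightarrow> 'a set \<Rightarrow> bool" where
  "lie_subalgebra br S \<longleftrightarrow> subspace S \<and> (\<forall>x\<in>S. \<forall>y\<in>S. br x y \<in> S)"

definition lie_ideal :: "('a::euclidean_space \<Rightarrow> 'a \<Rightarrow> 'a) \<Rightarrow> 'a set \<Rightarrow> bool" where
  "lie_ideal br I \<longleftrightarrow> subspace I \<and> (\<forall>x. \<forall>y\<in>I. br x y \<in> I)"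

text \<open>Simple factors of a semisimple Lie algebra = its minimal nonzero ideals.\<close>
definition simple_factor :: "('a::euclidean_space \<Rightarrow> 'a \<Rightarrow> 'a) \<Rightarrow> 'a set \<Rightarrow> bool" where
  "simple_factor br I \<longleftrightarrow> lie_ideal br I \<and> I \<noteq> {0} \<and>
     (\<forall>J. lie_ideal br J \<and> J \<subseteq> I \<longrightarrow> J = {0} \<or> J = I)"

text \<open>A simple factor is compact iff the Killing form is negative definite on it.\<close>
definition compact_factor :: "('a::euclidean_space \<Rightarrow> 'a \<Rightarrow> 'a) \<Rightarrow> 'a set \<Rightarrow> bool" where
  "compact_factor br I \<longleftrightarrow> simple_factor br I \<and> (\<forall>x\<in>I. x \<noteq> 0 \<longrightarrow> killing br x x < 0)"

definition no_compact_factors :: "('a::euclidean_space \<Rightarrow> 'a \<Rightarrow> 'a) \<Rightarrow> bool" where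
  "no_compact_factors br \<longleftrightarrow> (\<forall>I. \<not> compact_factor br I)"

definition real_diagonalizable :: "('a::euclidean_space \<Rightarrow> 'a) \<Rightarrow> bool" where
  "real_diagonalizable f \<longleftrightarrow> span {v. \<exists>c. f v = c *\<^sub>R v} = UNIV"

text \<open>Lie algebras of parabolic subgroups: \<open>p = \<Sum>\<^sub>c\<^sub>\<ge>\<^sub>0 ker(ad X - c)\<close> for some
  element \<open>X\<close> with \<open>ad X\<close> real diagonalizable.\<close>
definition parabolic_subalgebra :: "('a::euclidean_space \<Rightarrow> 'a \<Rightarrow> 'a) \<Rightarrow> 'a set \<Rightarrow> bool" where
  "parabolic_subalgebra br p \<longleftrightarrow>
     (\<exists>X. real_diagonalizable (br X) \<and> p = span {v. \<exists>c\<ge>0. br X v = c *\<^sub>R v})"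

definition killing_perp :: "('a::euclidean_space \<Rightarrow> 'a \<Rightarrow> 'a) \<Rightarrow> 'a set \<Rightarrow> 'a set" where
  "killing_perp br I = {z. \<forall>w\<in>I. killing br z w = 0}"

text \<open>The projection of \<open>p\<close> to the simple factor \<open>I\<close> (along the sum of the other
  simple factors, i.e. along the Killing-orthogonal complement of \<open>I\<close>) is onto \<open>I\<close>.\<close>
definition projection_onto :: "('a::euclidean_space \<Rightarrow> 'a \<Rightarrow> 'a) \<Rightarrow> 'a set \<Rightarrow> 'a set \<Rightarrow> bool" where
  "projection_onto br p I \<longleftrightarrow> (\<forall>y\<in>I. \<exists>x\<in>p. x - y \<in> killing_perp br I)"

definition absolutely_proper :: "('a::euclidean_space \<Rightarrow> 'a \<Rightarrow> 'a) \<Rightarrow> 'a set \<Rightarrow> bool" where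
  "absolutely_proper br p \<longleftrightarrow> (\<forall>I. simple_factor br I \<longrightarrow> \<not> projection_onto br p I)"

text \<open>Lie algebra of the unipotent radical: largest ideal of \<open>p\<close> consisting of
  ad-nilpotent elements (sum of all such ideals).\<close>
definition unipotent_radical :: "('a::euclidean_space \<Rightarrow> 'a \<Rightarrow> 'a) \<Rightarrow> 'a set \<Rightarrow> 'a set" where
  "unipotent_radical br p = span (\<Union>{J. subspace J \<and> J \<subseteq> p \<and> (\<forall>x\<in>p. \<forall>y\<in>J. br x y \<in> J) \<and>
        (\<forall>y\<in>J. \<exists>n. (br y ^^ n) = (\<lambda>_. 0))})"

text \<open>Lie algebras of connected Ad-diagonalizable subgroups: abelian subalgebras
  all of whose elements are ad-diagonalizable over the reals.\<close>
definition split_toral :: "('a::euclidean_space \<Rightarrow> 'a \<Rightarrow> 'a) \<Rightarrow> 'a set \<Rightarrow> bool" where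
  "split_toral br S \<longleftrightarrow> subspace S \<and> (\<forall>x\<in>S. \<forall>y\<in>S. br x y = 0) \<and>
     (\<forall>x\<in>S. real_diagonalizable (br x))"

definition maximal_split_toral_in :: "('a::euclidean_space \<Rightarrow> 'a \<Rightarrow> 'a) \<Rightarrow> 'a set \<Rightarrow> 'a set \<Rightarrow> bool" where
  "maximal_split_toral_in br p a \<longleftrightarrow> split_toral br a \<and> a \<subseteq> p \<and>
     (\<forall>b. split_toral br b \<and> b \<subseteq> p \<and> a \<subseteq> b \<longrightarrow> b = a)"

text \<open>Roots of \<open>a\<close> on \<open>u\<close>: nonzero linear functionals on \<open>a\<close> (represented as functions
  restricted to \<open>a\<close>) with nonzero weight space in \<open>u\<close>.\<close>
definition roots_on :: "('a::euclidean_space \<Rightarrow> 'a \<Rightarrow> 'a) \<Rightarrow> 'a set \<Rightarrow> 'a set \<Rightarrow> ('a \<Rightarrow> real) set" where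
  "roots_on br a u = {restrict \<alpha> a | \<alpha>. linear \<alpha> \<and> (\<exists>s\<in>a. \<alpha> s \<noteq> 0) \<and>
      (\<exists>v\<in>u. v \<noteq> 0 \<and> (\<forall>s\<in>a. br s v = \<alpha> s *\<^sub>R v))}"

definition dual_vec :: "('a::euclidean_space \<Rightarrow> 'a \<Rightarrow> 'a) \<Rightarrow> 'a set \<Rightarrow> ('a \<Rightarrow> real) \<Rightarrow> 'a" where
  "dual_vec br a \<alpha> = (THE s. s \<in> a \<and> (\<forall>t\<in>a. killing br s t = \<alpha> t))"

definition pos_cone :: "('a::euclidean_space \<Rightarrow> 'a \<Rightarrow> 'a) \<Rightarrow> 'a set \<Rightarrow> 'a set \<Rightarrow> 'a set" where
  "pos_cone br a u = {(\<Sum>\<alpha>\<in>roots_on br a u. t \<alpha> *\<^sub>R dual_vec br a \<alpha>) | t.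
       \<forall>\<alpha>\<in>roots_on br a u. t \<alpha> > 0}"

end

theory Submission
  imports Defs
begin

text \<open>
  The positive cone is the set of positive combinations of the finitely many vectors \<open>s\<^sub>\<alpha>\<close>.
  Such a cone is relatively open in the span of its generators, and its closure is the closed
  cone of nonnegative combinations, whose relative interior is the positive cone again. So
  everything reduces to showing that the \<open>s\<^sub>\<alpha>\<close> span \<open>\<aa>\<close>, i.e. that an \<open>s \<in> \<aa>\<close> on which
  all roots vanish is zero.

  Let \<open>\<pp>\<close> be the sum of the nonnegative eigenspaces of \<open>ad X\<close>, and \<open>\<uu>\<^sub>X\<close> the sum of the
  positive ones; \<open>\<uu>\<^sub>X\<close> is an ideal of \<open>\<pp>\<close> of ad-nilpotent elements, so it lies in \<open>\<uu>\<close>.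
  If all roots vanish on \<open>s\<close>, then \<open>ad s\<close> kills \<open>\<uu>\<^sub>X\<close>, since otherwise a joint
  \<open>\<aa>\<close>-eigenvector in \<open>\<uu>\<^sub>X\<close> gives a root not vanishing at \<open>s\<close>. Write \<open>s = s\<^sub>0 + s\<^sub>+\<close> with
  \<open>s\<^sub>0\<close> of \<open>X\<close>-degree \<open>0\<close> and \<open>s\<^sub>+ \<in> \<uu>\<^sub>X\<close>. Comparing degrees, \<open>s\<^sub>0\<close> centralizes all positive
  degrees, and by invariance and nondegeneracy of the Killing form also all negative ones.
  The degree-\<open>0\<close> elements with this property form an ideal of \<open>\<hh>\<close> inside \<open>\<pp>\<close>, which is zero
  because \<open>\<pp>\<close> is absolutely proper. Hence \<open>s \<in> \<uu>\<^sub>X\<close> is ad-nilpotent and ad-diagonalizable,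
  so \<open>ad s = 0\<close> and \<open>s = 0\<close> by semisimplicity.
\<close>

section \<open>Traces and eigenspaces\<close>

lemma ltrace_comp_commute:
  fixes f g :: "'a::euclidean_space \<Rightarrow> 'a"
  assumes "linear f" "linear g"
  shows "ltrace (f \<circ> g) = ltrace (g \<circ> f)"
proof -
  have expand: "ltrace (f \<circ> g) = (\<Sum>b\<in>Basis. \<Sum>c\<in>Basis. (g b \<bullet> c) * (f c \<bullet> b))"
    if "linear f" for f g :: "'a \<Rightarrow> 'a"
  proof -
    have "f (g b) = (\<Sum>c\<in>Basis. (g b \<bullet> c) *\<^sub>R f c)" for b
    proof -
      have "f (g b) = f (\<Sum>c\<in>Basis. (g b \<bullet> c) *\<^sub>R c)" by (simp add: euclidean_representation)
      then show ?thesis using that by (simp add: linear_sum linear_scale)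
    qed
    then show ?thesis by (simp add: ltrace_def inner_sum_left)
  qed
  show ?thesis
    unfolding expand[OF assms(1)] expand[OF assms(2)]
    by (subst sum.swap) (simp add: mult.commute)
qed

lemma ltrace_diff: "ltrace (\<lambda>x. f x - g x) = ltrace f - ltrace g"
  by (simp add: ltrace_def inner_diff_left sum_subtractf)

definition eigenspace :: "('a::real_vector \<Rightarrow> 'a) \<Rightarrow> real \<Rightarrow> 'a set" where
  "eigenspace f c = {v. f v = c *\<^sub>R v}"

lemma subspace_eigenspace: "linear f \<Longrightarrow> subspace (eigenspace f c)"
  by (auto simp: eigenspace_def subspace_def linear_add linear_scale linear_0 scaleR_add_right)

lemma weight_components_in_invariant_subspace:
  fixes G :: "'i \<Rightarrow> 'a::real_vector \<Rightarrow> 'a"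
  assumes "finite F"
    and lin: "\<And>i. i \<in> A \<Longrightarrow> linear (G i)"
    and W: "subspace W" "\<And>i w. i \<in> A \<Longrightarrow> w \<in> W \<Longrightarrow> G i w \<in> W"
    and "\<And>\<rho> \<sigma>. \<rho> \<in> F \<Longrightarrow> \<sigma> \<in> F \<Longrightarrow> \<rho> \<noteq> \<sigma> \<Longrightarrow> \<exists>i\<in>A. \<rho> i \<noteq> \<sigma> i"
    and "\<forall>\<rho>\<in>F. \<forall>i\<in>A. G i (vs \<rho>) = \<rho> i *\<^sub>R vs \<rho>"
    and "sum vs F \<in> W"
  shows "\<forall>\<rho>\<in>F. vs \<rho> \<in> W"
  using assms(1,5,6,7)
proof (induction F arbitrary: vs rule: finite_induct)
  case empty then show ?case by simp
next
  case (insert \<mu> F)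
  have sumW: "vs \<mu> + sum vs F \<in> W" using insert by simp
  \<comment> \<open>\<open>G i - \<mu> i\<close> kills the \<open>\<mu>\<close>-component and rescales the others by \<open>\<rho> i - \<mu> i\<close>.\<close>
  have scaled_in_W: "(\<rho> i - \<mu> i) *\<^sub>R vs \<rho> \<in> W" if "\<rho> \<in> F" "i \<in> A" for \<rho> i
  proof -
    let ?ws = "\<lambda>\<rho>. (\<rho> i - \<mu> i) *\<^sub>R vs \<rho>"
    have l: "linear (G i)" using lin \<open>i \<in> A\<close> by blast
    have "G i (vs \<mu> + sum vs F) - \<mu> i *\<^sub>R (vs \<mu> + sum vs F) \<in> W"
      using W sumW \<open>i \<in> A\<close> by (simp add: subspace_diff subspace_scale)
    also have "G i (vs \<mu> + sum vs F) - \<mu> i *\<^sub>R (vs \<mu> + sum vs F) = sum ?ws F"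
      using insert.prems(2) \<open>i \<in> A\<close>
      by (simp add: linear_add[OF l] linear_sum[OF l] scaleR_add_right scaleR_diff_left
          sum_subtractf scaleR_sum_right algebra_simps)
    finally have sum_ws: "sum ?ws F \<in> W" .
    have eig_ws: "\<forall>\<rho>\<in>F. \<forall>j\<in>A. G j (?ws \<rho>) = \<rho> j *\<^sub>R ?ws \<rho>"
      using insert.prems(2) lin by (simp add: linear_scale)
    have dist: "\<And>\<rho> \<sigma>. \<rho> \<in> F \<Longrightarrow> \<sigma> \<in> F \<Longrightarrow> \<rho> \<noteq> \<sigma> \<Longrightarrow> \<exists>i\<in>A. \<rho> i \<noteq> \<sigma> i"
      using insert.prems(1) by blast
    show ?thesis using insert.IH[OF dist eig_ws sum_ws] that(1) by blast
  qed
  have inF: "vs \<rho> \<in> W" if \<rho>: "\<rho> \<in> F" for \<rho>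
  proof -
    obtain i where i: "i \<in> A" "\<rho> i \<noteq> \<mu> i"
      using insert.prems(1)[of \<rho> \<mu>] \<rho> insert.hyps(2) by auto
    have "inverse (\<rho> i - \<mu> i) *\<^sub>R ((\<rho> i - \<mu> i) *\<^sub>R vs \<rho>) \<in> W"
      by (rule subspace_scale[OF W(1) scaled_in_W[OF \<rho> i(1)]])
    then show ?thesis using i by simp
  qed
  then have "sum vs F \<in> W" using W(1) by (simp add: subspace_sum)
  then have "vs \<mu> \<in> W" using sumW W(1) by (metis add_diff_cancel_right' subspace_diff)
  then show ?case using inF by auto
qed

lemma eigenspace_components_in_invariant_subspace:
  assumes "finite C" "linear f" "subspace W" "\<And>w. w \<in> W \<Longrightarrow> f w \<in> W"
    and "\<forall>c\<in>C. vs c \<in> eigenspace f c" "sum vs C \<in> W"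
  shows "\<forall>c\<in>C. vs c \<in> W"
proof -
  let ?F = "(\<lambda>c (_::unit). c) ` C"
  let ?vs = "\<lambda>\<rho>. vs (\<rho> ())"
  have inj: "inj_on (\<lambda>c (_::unit). c) C" by (auto simp: inj_on_def dest: fun_cong)
  have "sum ?vs ?F = sum vs C" by (simp add: sum.reindex[OF inj] o_def)
  have "\<forall>\<rho>\<in>?F. ?vs \<rho> \<in> W"
  proof (rule weight_components_in_invariant_subspace[where G="\<lambda>_. f" and A=UNIV])
    show "\<forall>\<rho>\<in>?F. \<forall>i\<in>UNIV. f (?vs \<rho>) = \<rho> i *\<^sub>R ?vs \<rho>"
      using assms(5) by (auto simp: eigenspace_def)
    show "\<exists>i\<in>UNIV. \<rho> i \<noteq> \<sigma> i" if "\<rho> \<noteq> \<sigma>" for \<rho> \<sigma> :: "unit \<Rightarrow> real"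
      using that by (auto simp: fun_eq_iff)
  qed (use assms \<open>sum ?vs ?F = sum vs C\<close> in auto)
  then show ?thesis by auto
qed

lemma eigenvectors_sum_zero:
  assumes "finite C" "linear f" "\<forall>c\<in>C. vs c \<in> eigenspace f c" "sum vs C = 0"
  shows "\<forall>c\<in>C. vs c = 0"
  using eigenspace_components_in_invariant_subspace[OF assms(1,2), of "{0}" vs] assms
  by (auto simp: linear_0)

lemma span_eigenspaces_sum:
  assumes "linear f" "x \<in> span (\<Union>c\<in>S. eigenspace f c)"
  obtains C vs where "finite C" "C \<subseteq> S" "\<forall>c\<in>C. vs c \<in> eigenspace f c" "x = sum vs C"
proof -
  have "\<exists>C vs. finite C \<and> C \<subseteq> S \<and> (\<forall>c\<in>C. vs c \<in> eigenspace f c) \<and> x = sum vs C"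
    using assms(2)
  proof (induction rule: span_induct_alt)
    case base
    show ?case by (rule exI[of _ "{}"]) auto
  next
    case (step k x y)
    obtain c0 where c0: "c0 \<in> S" "x \<in> eigenspace f c0" using step by auto
    obtain C vs where C: "finite C" "C \<subseteq> S" "\<forall>c\<in>C. vs c \<in> eigenspace f c" "y = sum vs C"
      using step by blast
    let ?vs = "\<lambda>c. (if c \<in> C then vs c else 0) + (if c = c0 then k *\<^sub>R x else 0)"
    have sub: "subspace (eigenspace f c)" for c by (rule subspace_eigenspace[OF assms(1)])
    have "\<forall>c\<in>insert c0 C. ?vs c \<in> eigenspace f c"
      using C(3) c0 subspace_0[OF sub] subspace_scale[OF sub] subspace_add[OF sub] by simp
    moreover have "k *\<^sub>R x + y = sum ?vs (insert c0 C)"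
      using C(1,4) by (simp add: sum.distrib sum.If_cases Int_insert_left insert_absorb)
    ultimately show ?case using C(1,2) c0(1) by (intro exI[of _ "insert c0 C"] exI[of _ ?vs]) auto
  qed
  with that show thesis by (elim exE conjE)
qed

lemma eigenspace_inter_span_other_eigenspaces:
  assumes "linear f" "x \<in> eigenspace f d" "x \<in> span (\<Union>c\<in>S. eigenspace f c)" "d \<notin> S"
  shows "x = 0"
proof -
  obtain C vs where C: "finite C" "C \<subseteq> S" "\<forall>c\<in>C. vs c \<in> eigenspace f c" "x = sum vs C"
    using span_eigenspaces_sum[OF assms(1,3)] by blast
  have dC: "d \<notin> C" using C(2) assms(4) by blast
  let ?vs = "vs(d := - x)"
  have "sum ?vs C = sum vs C" using dC by (intro sum.cong) auto
  then have "sum ?vs (insert d C) = 0" using C(1,4) dC by simp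
  moreover have "\<forall>c\<in>insert d C. ?vs c \<in> eigenspace f c"
    using C(3) assms(2) dC by (auto simp: eigenspace_def linear_neg[OF assms(1)])
  ultimately have "\<forall>c\<in>insert d C. ?vs c = 0"
    using eigenvectors_sum_zero[of "insert d C" f ?vs] C(1) assms(1) by blast
  then show ?thesis by simp
qed

lemma finite_weights:
  fixes G :: "'i \<Rightarrow> 'a::euclidean_space \<Rightarrow> 'a"
  assumes lin: "\<And>i. i \<in> A \<Longrightarrow> linear (G i)"
    and weight_vector: "\<And>\<rho>. \<rho> \<in> R \<Longrightarrow> \<exists>v. v \<noteq> 0 \<and> (\<forall>i\<in>A. G i v = \<rho> i *\<^sub>R v)"
    and dist: "\<And>\<rho> \<sigma>. \<rho> \<in> R \<Longrightarrow> \<sigma> \<in> R \<Longrightarrow> \<rho> \<noteq> \<sigma> \<Longrightarrow> \<exists>i\<in>A. \<rho> i \<noteq> \<sigma> i"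
  shows "finite R"
proof -
  have "card F \<le> DIM('a)" if F: "F \<subseteq> R" "finite F" for F
  proof -
    obtain v where v: "\<And>\<rho>. \<rho> \<in> F \<Longrightarrow> v \<rho> \<noteq> 0 \<and> (\<forall>i\<in>A. G i (v \<rho>) = \<rho> i *\<^sub>R v \<rho>)"
      using weight_vector F(1) by (metis subsetD)
    have inj: "inj_on v F"
    proof (rule inj_onI, rule ccontr)
      fix \<rho> \<sigma> assume rs: "\<rho> \<in> F" "\<sigma> \<in> F" "v \<rho> = v \<sigma>" "\<rho> \<noteq> \<sigma>"
      then obtain i where i: "i \<in> A" "\<rho> i \<noteq> \<sigma> i" using dist F(1) by blast
      have "\<rho> i *\<^sub>R v \<rho> = \<sigma> i *\<^sub>R v \<rho>" using v[OF rs(1)] v[OF rs(2)] i(1) rs(3) by metis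
      then show False using i(2) v[OF rs(1)] by (simp add: scaleR_cancel_right)
    qed
    have "independent (v ` F)"
    proof
      assume "dependent (v ` F)"
      then obtain u where u: "\<exists>w\<in>v ` F. u w \<noteq> 0" "(\<Sum>w\<in>v ` F. u w *\<^sub>R w) = 0"
        using dependent_finite[of "v ` F"] F(2) by blast
      have "\<forall>\<rho>\<in>F. u (v \<rho>) *\<^sub>R v \<rho> \<in> {0}"
      proof (rule weight_components_in_invariant_subspace[where G=G and A=A, OF F(2) lin])
        show "\<forall>\<rho>\<in>F. \<forall>i\<in>A. G i (u (v \<rho>) *\<^sub>R v \<rho>) = \<rho> i *\<^sub>R (u (v \<rho>) *\<^sub>R v \<rho>)"
          using v lin by (simp add: linear_scale)
        show "(\<Sum>\<rho>\<in>F. u (v \<rho>) *\<^sub>R v \<rho>) \<in> {0}" using u(2) by (simp add: sum.reindex[OF inj])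
        show "\<And>i w. i \<in> A \<Longrightarrow> w \<in> {0} \<Longrightarrow> G i w \<in> {0}" using lin linear_0 by auto
        show "\<And>\<rho> \<sigma>. \<rho> \<in> F \<Longrightarrow> \<sigma> \<in> F \<Longrightarrow> \<rho> \<noteq> \<sigma> \<Longrightarrow> \<exists>i\<in>A. \<rho> i \<noteq> \<sigma> i"
          using dist F(1) by blast
      qed (simp_all add: subspace_single_0)
      then show False using u(1) v by auto
    qed
    then have "card (v ` F) \<le> DIM('a)" using independent_bound by blast
    then show ?thesis using card_image[OF inj] by simp
  qed
  then show ?thesis using finite_if_finite_subsets_card_bdd by blast
qed

lemma finite_eigenvalues:
  fixes f :: "'a::euclidean_space \<Rightarrow> 'a"
  assumes "linear f"
  shows "finite {c. eigenspace f c \<noteq> {0}}"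
proof -
  let ?const = "\<lambda>c (_::unit). c"
  have "finite (?const ` {c. eigenspace f c \<noteq> {0}})"
  proof (rule finite_weights[where G="\<lambda>_. f" and A=UNIV])
    fix \<rho> assume "\<rho> \<in> ?const ` {c. eigenspace f c \<noteq> {0}}"
    then obtain c where c: "eigenspace f c \<noteq> {0}" "\<rho> = ?const c" by blast
    then obtain v where "v \<in> eigenspace f c" "v \<noteq> 0"
      using subspace_0[OF subspace_eigenspace[OF assms]] by blast
    then show "\<exists>v. v \<noteq> 0 \<and> (\<forall>i\<in>UNIV. f v = \<rho> i *\<^sub>R v)" using c(2) by (auto simp: eigenspace_def)
  next
    fix \<rho> \<sigma> :: "unit \<Rightarrow> real"
    assume "\<rho> \<noteq> \<sigma>"
    then show "\<exists>i\<in>UNIV. \<rho> i \<noteq> \<sigma> i" by (auto simp: fun_eq_iff)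
  qed (use assms in simp)
  moreover have "inj_on ?const {c. eigenspace f c \<noteq> {0}}"
    by (auto simp: inj_on_def dest: fun_cong)
  ultimately show ?thesis using finite_imageD by blast
qed

lemma span_eigenspaces_diagonalizable:
  "real_diagonalizable f \<Longrightarrow> span (\<Union>c. eigenspace f c) = UNIV"
proof -
  have "{v. \<exists>c. f v = c *\<^sub>R v} = (\<Union>c. eigenspace f c)" unfolding eigenspace_def by blast
  then show "real_diagonalizable f \<Longrightarrow> span (\<Union>c. eigenspace f c) = UNIV"
    by (simp add: real_diagonalizable_def)
qed

lemma diagonalizable_sum_eigenvectors:
  assumes "linear f" "real_diagonalizable f"
  obtains C vs where "finite C" "\<forall>c\<in>C. vs c \<in> eigenspace f c" "x = sum vs C"
  using span_eigenspaces_sum[OF assms(1), of x UNIV] span_eigenspaces_diagonalizable[OF assms(2)]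
  by auto

lemma diagonalizable_invariant_subspace_eigenvector:
  assumes "linear f" "real_diagonalizable f"
    and "subspace W" "W \<noteq> {0}" "\<And>w. w \<in> W \<Longrightarrow> f w \<in> W"
  obtains c v where "v \<in> W" "v \<noteq> 0" "v \<in> eigenspace f c"
proof -
  obtain w where w: "w \<in> W" "w \<noteq> 0" using assms(3,4) subspace_0 by blast
  obtain C vs where C: "finite C" "\<forall>c\<in>C. vs c \<in> eigenspace f c" "w = sum vs C"
    using diagonalizable_sum_eigenvectors[OF assms(1,2)] by blast
  have "\<forall>c\<in>C. vs c \<in> W"
    using eigenspace_components_in_invariant_subspace[OF C(1) assms(1,3,5) C(2)] C(3) w(1) by simp
  moreover obtain c where "c \<in> C" "vs c \<noteq> 0" using C(3) w(2) by (metis sum.neutral)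
  ultimately show thesis using that C(2) by blast
qed

lemma commuting_diagonalizable_joint_eigenvector:
  fixes T :: "('a::euclidean_space \<Rightarrow> 'a) set"
  assumes "finite T" "\<forall>g\<in>T. linear g \<and> real_diagonalizable g" "\<forall>g\<in>T. \<forall>h\<in>T. g \<circ> h = h \<circ> g"
    and "subspace W" "W \<noteq> {0}" "\<forall>g\<in>T. \<forall>w\<in>W. g w \<in> W"
  shows "\<exists>v\<in>W. v \<noteq> 0 \<and> (\<forall>g\<in>T. \<exists>c. g v = c *\<^sub>R v)"
  using assms
proof (induction T arbitrary: W rule: finite_induct)
  case empty
  then show ?case using subspace_0 by blast
next
  case (insert g T)
  have g: "linear g" "real_diagonalizable g" using insert.prems(1) by auto
  have "g w \<in> W" if "w \<in> W" for w using insert.prems(5) that by blast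
  then obtain c v where v: "v \<in> W" "v \<noteq> 0" "v \<in> eigenspace g c"
    by (rule diagonalizable_invariant_subspace_eigenvector[OF g insert.prems(3,4)])
  let ?W = "W \<inter> eigenspace g c"
  have "\<forall>h\<in>T. \<forall>w\<in>?W. h w \<in> ?W"
  proof (intro ballI)
    fix h w assume h: "h \<in> T" and w: "w \<in> ?W"
    have "g \<circ> h = h \<circ> g" and "linear h" using insert.prems(1,2) h by blast+
    then have "h w \<in> eigenspace g c"
      using w by (simp add: eigenspace_def linear_scale fun_eq_iff)
    then show "h w \<in> ?W" using insert.prems(5) h w by blast
  qed
  moreover have "subspace ?W" using insert.prems(3) subspace_eigenspace[OF g(1)] by (rule subspace_inter)
  moreover have "?W \<noteq> {0}" using v by blast
  ultimately obtain u where "u \<in> ?W" "u \<noteq> 0" "\<forall>h\<in>T. \<exists>c. h u = c *\<^sub>R u"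
    using insert.IH[of ?W] insert.prems(1,2) by blast
  then show ?case by (auto simp: eigenspace_def)
qed

lemma diagonalizable_nilpotent_eq_0:
  assumes "linear f" "real_diagonalizable f" "(f ^^ n) = (\<lambda>_. 0)"
  shows "f x = 0"
proof (rule linear_eq_0_on_span[OF assms(1)])
  show "x \<in> span {v. \<exists>c. f v = c *\<^sub>R v}" using assms(2) by (simp add: real_diagonalizable_def)
next
  fix v assume "v \<in> {v. \<exists>c. f v = c *\<^sub>R v}"
  then obtain c where c: "f v = c *\<^sub>R v" by blast
  have "(f ^^ m) v = c ^ m *\<^sub>R v" for m
    by (induction m) (simp_all add: c linear_scale[OF assms(1)])
  then have "c ^ n *\<^sub>R v = 0" using assms(3) by (metis fun_cong)
  then show "f v = 0" using c by auto
qed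

lemma diagonalizable_eigenbasis:
  fixes f :: "'a::euclidean_space \<Rightarrow> 'a"
  assumes "real_diagonalizable f"
  obtains P :: "'a \<Rightarrow> 'a" and lam where "linear P" "surj P" "\<And>b. b \<in> Basis \<Longrightarrow> f (P b) = lam b *\<^sub>R P b"
proof -
  let ?V = "{v. \<exists>c. f v = c *\<^sub>R v}"
  obtain B where B: "B \<subseteq> ?V" "independent B" "?V \<subseteq> span B"
    by (rule maximal_independent_subset)
  have span_B: "span B = UNIV"
    using span_minimal[OF B(3) subspace_span] assms by (auto simp: real_diagonalizable_def)
  have "card B = card (Basis::'a set)"
    using dim_eq_card_independent[OF B(2)] dim_span[of B] span_B by simp
  then obtain \<sigma> where \<sigma>: "bij_betw \<sigma> (Basis::'a set) B"
    using finite_same_card_bij[OF finite_Basis independent_imp_finite[OF B(2)]] by metis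
  define P where "P y = (\<Sum>b\<in>Basis. (y \<bullet> b) *\<^sub>R \<sigma> b)" for y
  have lin: "linear P"
    by (rule linearI) (simp_all add: P_def inner_add_left scaleR_add_left sum.distrib scaleR_sum_right)
  have P_Basis: "P b = \<sigma> b" if "b \<in> Basis" for b
  proof -
    have "P b = (\<Sum>b'\<in>Basis. if b' = b then \<sigma> b else 0)"
      unfolding P_def using that by (intro sum.cong) (auto simp: inner_Basis)
    then show ?thesis using that by (simp add: sum.delta')
  qed
  have surj: "surj P"
  proof -
    have "B \<subseteq> range P" using \<sigma> P_Basis by (auto simp: bij_betw_def) (metis rangeI)
    then have "span B \<subseteq> range P"
      using span_minimal linear_subspace_image[OF lin subspace_UNIV] by blast
    then show ?thesis using span_B by auto
  qed
  have "\<exists>c. f (P b) = c *\<^sub>R P b" if "b \<in> Basis" for b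
  proof -
    have "\<sigma> b \<in> B" using bij_betwE[OF \<sigma>] that by blast
    then show ?thesis using B(1) P_Basis[OF that] by auto
  qed
  then obtain lam where lam: "\<And>b. b \<in> Basis \<Longrightarrow> f (P b) = lam b *\<^sub>R P b" by metis
  show thesis by (rule that[OF lin surj lam])
qed

definition diagonal_map :: "('a::euclidean_space \<Rightarrow> real) \<Rightarrow> 'a \<Rightarrow> 'a" where
  "diagonal_map lam y = (\<Sum>b\<in>Basis. (lam b * (y \<bullet> b)) *\<^sub>R b)"

lemma linear_diagonal_map: "linear (diagonal_map lam)"
  by (rule linearI) (simp_all add: diagonal_map_def inner_add_left distrib_left scaleR_add_left
      sum.distrib scaleR_sum_right mult.left_commute)

lemma diagonal_map_Basis: "b \<in> Basis \<Longrightarrow> diagonal_map lam b = lam b *\<^sub>R b"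
proof -
  assume b: "b \<in> Basis"
  have "diagonal_map lam b = (\<Sum>b'\<in>Basis. if b' = b then lam b *\<^sub>R b else 0)"
    unfolding diagonal_map_def using b by (intro sum.cong) (auto simp: inner_Basis)
  then show ?thesis using b by (simp add: sum.delta')
qed

lemma ltrace_diagonal_map_square:
  "ltrace (diagonal_map lam \<circ> diagonal_map lam) = (\<Sum>b\<in>Basis. (lam b)\<^sup>2)"
  unfolding ltrace_def
  by (intro sum.cong) (auto simp: diagonal_map_Basis linear_scale[OF linear_diagonal_map] power2_eq_square)

lemma ltrace_square_diagonalizable_pos:
  fixes f :: "'a::euclidean_space \<Rightarrow> 'a"
  assumes "linear f" "real_diagonalizable f" "f x \<noteq> 0"
  shows "ltrace (f \<circ> f) > 0"
proof -
  obtain P :: "'a \<Rightarrow> 'a" and lam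
    where P: "linear P" "surj P" and eig: "\<And>b. b \<in> Basis \<Longrightarrow> f (P b) = lam b *\<^sub>R P b"
    using diagonalizable_eigenbasis[OF assms(2)] by blast
  obtain Q where Q: "linear Q" "\<And>y. Q (P y) = y" "\<And>y. P (Q y) = y"
    using linear_surjective_isomorphism[OF P] by auto
  let ?D = "diagonal_map lam"
  have fP: "f \<circ> P = P \<circ> ?D"
    by (rule linear_eq_stdbasis) (use P(1) assms(1) eig in
        \<open>auto intro: linear_compose linear_diagonal_map simp: linear_scale diagonal_map_Basis\<close>)
  then have "f \<circ> f = P \<circ> (?D \<circ> ?D \<circ> Q)"
    by (simp add: fun_eq_iff) (metis Q(3))
  moreover have "linear (?D \<circ> ?D \<circ> Q)" by (intro linear_compose Q(1) linear_diagonal_map)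
  ultimately have "ltrace (f \<circ> f) = ltrace ((?D \<circ> ?D \<circ> Q) \<circ> P)"
    using ltrace_comp_commute[OF P(1)] by simp
  also have "(?D \<circ> ?D \<circ> Q) \<circ> P = ?D \<circ> ?D" by (auto simp: Q(2))
  also have "ltrace (?D \<circ> ?D) = (\<Sum>b\<in>Basis. (lam b)\<^sup>2)" by (rule ltrace_diagonal_map_square)
  finally have trace_eq: "ltrace (f \<circ> f) = (\<Sum>b\<in>Basis. (lam b)\<^sup>2)" .
  have "\<exists>b\<in>Basis. lam b \<noteq> 0"
  proof (rule ccontr)
    assume "\<not> ?thesis"
    then have "?D = (\<lambda>_. 0)"
      by (intro linear_eq_stdbasis linear_diagonal_map) (auto simp: diagonal_map_Basis module_hom_zero)
    then show False using fP assms(3) Q(3)[of x] by (metis comp_apply linear_0[OF P(1)])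
  qed
  then show ?thesis unfolding trace_eq
    by (metis finite_Basis sum_pos2 zero_le_power2 zero_less_power2)
qed

section \<open>Nondegenerate bilinear forms on a subspace\<close>

lemma linear_inj_on_subspace_image_eq:
  fixes f :: "'a::euclidean_space \<Rightarrow> 'a"
  assumes "linear f" "subspace S" "inj_on f S" "f ` S \<subseteq> S"
  shows "f ` S = S"
proof -
  have "dim (f ` S) = dim S"
    by (rule dim_image_eq[OF assms(1)]) (use assms(2,3) in \<open>simp add: span_eq_iff[THEN iffD2]\<close>)
  then show ?thesis
    by (intro subspace_dim_equal linear_subspace_image[OF assms(1,2)] assms(2,4)) simp
qed

lemma nondegenerate_form_represents:
  fixes k :: "'a::euclidean_space \<Rightarrow> 'a \<Rightarrow> real"
  assumes left: "\<And>y. linear (\<lambda>x. k x y)" and right: "\<And>x. linear (k x)"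
    and S: "subspace S" and nondeg: "\<And>z. z \<in> S \<Longrightarrow> \<forall>t\<in>S. k z t = 0 \<Longrightarrow> z = 0"
    and "linear \<alpha>"
  shows "\<exists>!s. s \<in> S \<and> (\<forall>t\<in>S. k s t = \<alpha> t)"
proof -
  have unique: "s = s'" if "s \<in> S" "s' \<in> S" "\<forall>t\<in>S. k s t = k s' t" for s s'
    using nondeg[of "s - s'"] that S by (simp add: subspace_diff linear_diff[OF left])
  obtain E where E: "E \<subseteq> S" "pairwise orthogonal E" "\<And>x. x \<in> E \<Longrightarrow> norm x = 1"
      "independent E" "span E = S"
    using orthonormal_basis_subspace[OF S] by metis
  have fE: "finite E" using E(4) by (rule independent_imp_finite)
  have coeff: "(\<Sum>e\<in>E. c e *\<^sub>R e) \<bullet> e' = c e'" if "e' \<in> E" for c e'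
  proof -
    have "(\<Sum>e\<in>E. c e *\<^sub>R e) \<bullet> e' = (\<Sum>e\<in>E. if e = e' then c e' else 0)"
      unfolding inner_sum_left using E(2,3) that
      by (intro sum.cong) (auto simp: norm_eq_1 pairwise_def orthogonal_def)
    then show ?thesis using fE that by simp
  qed
  have in_S: "(\<Sum>e\<in>E. c e *\<^sub>R e) \<in> S" for c
    using E(1) by (intro subspace_sum[OF S] subspace_scale[OF S]) auto
  define M where "M s = (\<Sum>e\<in>E. k s e *\<^sub>R e)" for s
  have M: "linear M"
    by (rule linearI) (simp_all add: M_def linear_add[OF left] linear_scale[OF left]
        scaleR_add_left sum.distrib scaleR_sum_right)
  have agree_on_S: "\<forall>t\<in>S. k s t = \<beta> t" if "\<forall>e\<in>E. k s e = \<beta> e" "linear \<beta>" for s \<beta>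
    using linear_eq_on_span[OF right that(2), of E] that(1) E(5) by blast
  have "inj_on M S"
  proof (rule inj_onI)
    fix s s' assume "s \<in> S" "s' \<in> S" "M s = M s'"
    then show "s = s'"
      using unique agree_on_S[OF _ right] coeff[of _ "\<lambda>e. k s e"] coeff[of _ "\<lambda>e. k s' e"]
      unfolding M_def by metis
  qed
  then have "M ` S = S" using linear_inj_on_subspace_image_eq[OF M S] in_S by (auto simp: M_def)
  then obtain s where s: "s \<in> S" "M s = (\<Sum>e\<in>E. \<alpha> e *\<^sub>R e)" using in_S by (metis imageE)
  then have "\<forall>e\<in>E. k s e = \<alpha> e" using coeff by (metis M_def)
  then have "\<forall>t\<in>S. k s t = \<alpha> t" using agree_on_S \<open>linear \<alpha>\<close> by blast
  then show ?thesis using s(1) unique by (metis (full_types))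
qed

lemma span_of_separating_family:
  fixes k :: "'a::euclidean_space \<Rightarrow> 'a \<Rightarrow> real" and g :: "'r \<Rightarrow> 'a"
  assumes "finite R" and left: "\<And>y. linear (\<lambda>x. k x y)" and right: "\<And>x. linear (k x)"
    and S: "subspace S" "g ` R \<subseteq> S"
    and separating: "\<And>z. z \<in> S \<Longrightarrow> \<forall>\<rho>\<in>R. k (g \<rho>) z = 0 \<Longrightarrow> z = 0"
  shows "S \<subseteq> span (g ` R)"
proof -
  define \<Phi> where "\<Phi> z = (\<Sum>\<rho>\<in>R. k (g \<rho>) z *\<^sub>R g \<rho>)" for z
  have \<Phi>: "linear \<Phi>"
    by (rule linearI) (simp_all add: \<Phi>_def linear_add[OF right] linear_scale[OF right]
        scaleR_add_left sum.distrib scaleR_sum_right)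
  have "inj_on \<Phi> S"
  proof (rule inj_onI)
    fix s s' assume s: "s \<in> S" "s' \<in> S" "\<Phi> s = \<Phi> s'"
    define z where "z = s - s'"
    have "z \<in> S" unfolding z_def using S(1) s by (simp add: subspace_diff)
    have "\<Phi> z = 0" unfolding z_def using s(3) by (simp add: linear_diff[OF \<Phi>])
    then have "0 = k (\<Phi> z) z" using linear_0[OF left] by simp
    also have "\<dots> = (\<Sum>\<rho>\<in>R. (k (g \<rho>) z)\<^sup>2)"
      unfolding \<Phi>_def by (simp add: linear_sum[OF left] linear_scale[OF left] power2_eq_square)
    finally have "\<forall>\<rho>\<in>R. k (g \<rho>) z = 0" using sum_nonneg_eq_0_iff[OF assms(1), of "\<lambda>\<rho>. (k (g \<rho>) z)\<^sup>2"] by simp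
    then show "s = s'" using separating[OF \<open>z \<in> S\<close>] by (simp add: z_def)
  qed
  moreover have "\<Phi> ` S \<subseteq> S" using S by (auto simp: \<Phi>_def intro!: subspace_sum subspace_scale)
  ultimately have "S = \<Phi> ` S" using linear_inj_on_subspace_image_eq[OF \<Phi> S(1)] by simp
  also have "\<dots> \<subseteq> span (g ` R)" unfolding \<Phi>_def by (intro image_subsetI span_sum span_scale span_base imageI)
  finally show ?thesis .
qed

section \<open>Cones spanned by a finite family\<close>

lemma sum_scaled_image_in_span: "(\<Sum>\<rho>\<in>R. c \<rho> *\<^sub>R g \<rho>) \<in> span (g ` R)"
  by (intro span_sum span_scale span_base imageI)

lemma span_image_finite_sum:
  fixes g :: "'r \<Rightarrow> 'a::real_vector"
  assumes "finite R" "y \<in> span (g ` R)"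
  obtains c where "y = (\<Sum>\<rho>\<in>R. c \<rho> *\<^sub>R g \<rho>)"
proof -
  have "\<exists>c. y = (\<Sum>\<rho>\<in>R. c \<rho> *\<^sub>R g \<rho>)"
    using assms(2)
  proof (induction rule: span_induct_alt)
    case base
    show ?case by (rule exI[of _ "\<lambda>_. 0"]) simp
  next
    case (step k x y)
    obtain \<rho>0 where \<rho>0: "\<rho>0 \<in> R" "x = g \<rho>0" using step by blast
    obtain c where c: "y = (\<Sum>\<rho>\<in>R. c \<rho> *\<^sub>R g \<rho>)" using step by blast
    have "(\<Sum>\<rho>\<in>R. (c \<rho> + (if \<rho> = \<rho>0 then k else 0)) *\<^sub>R g \<rho>) = y + k *\<^sub>R x"
      using assms(1) \<rho>0 by (simp add: scaleR_add_left sum.distrib c if_distrib[of "\<lambda>t. t *\<^sub>R _"]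
          sum.delta cong: if_cong)
    then show ?case by (metis add.commute)
  qed
  then show thesis using that by blast
qed

lemma span_image_bounded_coefficients:
  fixes g :: "'r \<Rightarrow> 'a::euclidean_space"
  assumes "finite R"
  obtains K where "K \<ge> 0"
    "\<And>z. z \<in> span (g ` R) \<Longrightarrow> \<exists>d. z = (\<Sum>\<rho>\<in>R. d \<rho> *\<^sub>R g \<rho>) \<and> (\<forall>\<rho>\<in>R. \<bar>d \<rho>\<bar> \<le> K * norm z)"
proof -
  obtain E where E: "E \<subseteq> span (g ` R)" "pairwise orthogonal E" "\<And>x. x \<in> E \<Longrightarrow> norm x = 1"
      "independent E" "span E = span (g ` R)"
    using orthonormal_basis_subspace[OF subspace_span] by metis
  have fE: "finite E" using E(4) by (rule independent_imp_finite)
  have "\<forall>e\<in>E. \<exists>c. e = (\<Sum>\<rho>\<in>R. c \<rho> *\<^sub>R g \<rho>)"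
    using span_image_finite_sum[OF assms] E(1) by blast
  then obtain c where c: "\<And>e. e \<in> E \<Longrightarrow> e = (\<Sum>\<rho>\<in>R. c e \<rho> *\<^sub>R g \<rho>)" by metis
  define K where "K = (\<Sum>e\<in>E. \<Sum>\<rho>\<in>R. \<bar>c e \<rho>\<bar>)"
  have "K \<ge> 0" unfolding K_def by (intro sum_nonneg) auto
  moreover have "\<exists>d. z = (\<Sum>\<rho>\<in>R. d \<rho> *\<^sub>R g \<rho>) \<and> (\<forall>\<rho>\<in>R. \<bar>d \<rho>\<bar> \<le> K * norm z)"
    if z: "z \<in> span (g ` R)" for z
  proof (intro exI conjI ballI)
    define d where "d \<rho> = (\<Sum>e\<in>E. (z \<bullet> e) * c e \<rho>)" for \<rho>
    have "z = (\<Sum>e\<in>E. (z \<bullet> e) *\<^sub>R e)"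
      using orthonormal_basis_expand[OF E(2,3) _ fE, of z] z E(5) by simp
    also have "\<dots> = (\<Sum>e\<in>E. (z \<bullet> e) *\<^sub>R (\<Sum>\<rho>\<in>R. c e \<rho> *\<^sub>R g \<rho>))"
      using c by (intro sum.cong) auto
    also have "\<dots> = (\<Sum>\<rho>\<in>R. d \<rho> *\<^sub>R g \<rho>)"
      by (simp add: d_def scaleR_sum_right scaleR_sum_left sum.swap[of _ E R])
    finally show "z = (\<Sum>\<rho>\<in>R. d \<rho> *\<^sub>R g \<rho>)" .
    fix \<rho> assume "\<rho> \<in> R"
    have "\<bar>d \<rho>\<bar> \<le> (\<Sum>e\<in>E. \<bar>(z \<bullet> e) * c e \<rho>\<bar>)" unfolding d_def by (rule sum_abs)
    also have "\<dots> \<le> (\<Sum>e\<in>E. norm z * \<bar>c e \<rho>\<bar>)"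
    proof (intro sum_mono)
      fix e assume "e \<in> E"
      have "\<bar>z \<bullet> e\<bar> \<le> norm z" using Cauchy_Schwarz_ineq2[of z e] E(3)[OF \<open>e \<in> E\<close>] by simp
      then show "\<bar>(z \<bullet> e) * c e \<rho>\<bar> \<le> norm z * \<bar>c e \<rho>\<bar>"
        by (simp add: abs_mult mult_right_mono)
    qed
    also have "\<dots> \<le> norm z * K"
      unfolding K_def sum_distrib_left[symmetric]
      by (intro mult_left_mono sum_mono member_le_sum) (auto simp: assms \<open>\<rho> \<in> R\<close>)
    finally show "\<bar>d \<rho>\<bar> \<le> K * norm z" by (simp add: mult.commute)
  qed
  ultimately show thesis using that by blast
qed

lemma convex_cone_nonneg_combinations:
  fixes g :: "'r \<Rightarrow> 'a::real_vector"
  shows "convex_cone {\<Sum>\<rho>\<in>R. t \<rho> *\<^sub>R g \<rho> | t. \<forall>\<rho>\<in>R. t \<rho> \<ge> 0}" (is "convex_cone ?C")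
  unfolding convex_cone_iff
proof (intro conjI ballI allI impI)
  show "0 \<in> ?C" by (auto intro: exI[of _ "\<lambda>_. 0"])
  fix x y assume "x \<in> ?C" "y \<in> ?C"
  then obtain t t' where "x = (\<Sum>\<rho>\<in>R. t \<rho> *\<^sub>R g \<rho>)" "\<forall>\<rho>\<in>R. t \<rho> \<ge> 0"
    "y = (\<Sum>\<rho>\<in>R. t' \<rho> *\<^sub>R g \<rho>)" "\<forall>\<rho>\<in>R. t' \<rho> \<ge> 0" by blast
  then show "x + y \<in> ?C"
    by (intro CollectI exI[of _ "\<lambda>\<rho>. t \<rho> + t' \<rho>"]) (simp add: scaleR_add_left sum.distrib)
next
  fix x and k :: real assume "x \<in> ?C" "0 \<le> k"
  then obtain t where "x = (\<Sum>\<rho>\<in>R. t \<rho> *\<^sub>R g \<rho>)" "\<forall>\<rho>\<in>R. t \<rho> \<ge> 0" by blast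
  then show "k *\<^sub>R x \<in> ?C" using \<open>0 \<le> k\<close>
    by (intro CollectI exI[of _ "\<lambda>\<rho>. k * t \<rho>"]) (simp add: scaleR_sum_right)
qed

lemma convex_cone_hull_finite_image:
  fixes g :: "'r \<Rightarrow> 'a::real_vector"
  assumes "finite R"
  shows "convex_cone hull (g ` R) = {\<Sum>\<rho>\<in>R. t \<rho> *\<^sub>R g \<rho> | t. \<forall>\<rho>\<in>R. t \<rho> \<ge> 0}"
    (is "_ = ?C")
proof
  have "g ` R \<subseteq> ?C"
  proof
    fix y assume "y \<in> g ` R"
    then obtain \<rho>0 where "\<rho>0 \<in> R" "y = g \<rho>0" by blast
    then have "y = (\<Sum>\<rho>\<in>R. (if \<rho> = \<rho>0 then 1 else 0) *\<^sub>R g \<rho>)"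
      using assms by (simp add: if_distrib[of "\<lambda>t. t *\<^sub>R _"] sum.delta cong: if_cong)
    then show "y \<in> ?C" by (intro CollectI exI[of _ "\<lambda>\<rho>. if \<rho> = \<rho>0 then 1 else 0"]) auto
  qed
  then show "convex_cone hull (g ` R) \<subseteq> ?C"
    using convex_cone_nonneg_combinations[of g R] by (rule hull_minimal)
next
  show "?C \<subseteq> convex_cone hull (g ` R)"
  proof
    fix x assume "x \<in> ?C"
    then obtain t where t: "x = (\<Sum>\<rho>\<in>R. t \<rho> *\<^sub>R g \<rho>)" "\<forall>\<rho>\<in>R. t \<rho> \<ge> 0" by blast
    have "(\<Sum>\<rho>\<in>F. t \<rho> *\<^sub>R g \<rho>) \<in> convex_cone hull (g ` R)" if "F \<subseteq> R" for F
      using finite_subset[OF that assms] that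
    proof (induction F rule: finite_induct)
      case empty then show ?case by (simp add: convex_cone_hull_contains_0)
    next
      case (insert \<rho> F)
      have "t \<rho> *\<^sub>R g \<rho> \<in> convex_cone hull (g ` R)"
        using insert.prems t(2) by (intro convex_cone_hull_mul hull_inc) auto
      then show ?case using insert by (simp add: convex_cone_hull_add)
    qed
    then show "x \<in> convex_cone hull (g ` R)" using t(1) by blast
  qed
qed

lemma openin_positive_combinations:
  fixes g :: "'r \<Rightarrow> 'a::euclidean_space"
  assumes "finite R"
  shows "openin (top_of_set (span (g ` R))) {\<Sum>\<rho>\<in>R. t \<rho> *\<^sub>R g \<rho> | t. \<forall>\<rho>\<in>R. t \<rho> > 0}"
    (is "openin _ ?P")
proof -
  obtain K where K: "K \<ge> 0"
    "\<And>z. z \<in> span (g ` R) \<Longrightarrow> \<exists>d. z = (\<Sum>\<rho>\<in>R. d \<rho> *\<^sub>R g \<rho>) \<and> (\<forall>\<rho>\<in>R. \<bar>d \<rho>\<bar> \<le> K * norm z)"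
    using span_image_bounded_coefficients[OF assms] by blast
  show ?thesis
    unfolding openin_euclidean_subtopology_iff
  proof (intro conjI ballI)
    show "?P \<subseteq> span (g ` R)" using sum_scaled_image_in_span by blast
    fix x assume "x \<in> ?P"
    then obtain t where t: "x = (\<Sum>\<rho>\<in>R. t \<rho> *\<^sub>R g \<rho>)" "\<forall>\<rho>\<in>R. t \<rho> > 0" by blast
    define \<tau> where "\<tau> = Min (insert 1 (t ` R))"
    have \<tau>: "\<tau> > 0" "\<And>\<rho>. \<rho> \<in> R \<Longrightarrow> \<tau> \<le> t \<rho>"
      using assms t(2) by (auto simp: \<tau>_def)
    show "\<exists>e>0. \<forall>x'\<in>span (g ` R). dist x' x < e \<longrightarrow> x' \<in> ?P"
    proof (intro exI[of _ "\<tau> / (K + 1)"] conjI ballI impI)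
      show "\<tau> / (K + 1) > 0" using \<tau>(1) K(1) by simp
      fix x' assume x': "x' \<in> span (g ` R)" "dist x' x < \<tau> / (K + 1)"
      have "x \<in> span (g ` R)" using t(1) sum_scaled_image_in_span by simp
      then obtain d where d: "x' - x = (\<Sum>\<rho>\<in>R. d \<rho> *\<^sub>R g \<rho>)" "\<forall>\<rho>\<in>R. \<bar>d \<rho>\<bar> \<le> K * norm (x' - x)"
        using K(2)[of "x' - x"] x'(1) by (meson span_diff)
      have "K * norm (x' - x) \<le> (K + 1) * norm (x' - x)" by (simp add: distrib_right)
      also have "\<dots> < \<tau>" using x'(2) K(1) by (simp add: dist_norm field_simps)
      finally have "\<forall>\<rho>\<in>R. t \<rho> + d \<rho> > 0" using d(2) \<tau>(2) by (fastforce simp: abs_le_iff)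
      moreover have "x' = (\<Sum>\<rho>\<in>R. (t \<rho> + d \<rho>) *\<^sub>R g \<rho>)"
        using t(1) d(1) by (simp add: scaleR_add_left sum.distrib algebra_simps)
      ultimately show "x' \<in> ?P" by (intro CollectI exI[of _ "\<lambda>\<rho>. t \<rho> + d \<rho>"]) simp
    qed
  qed
qed

lemma closure_positive_combinations_subset:
  fixes g :: "'r \<Rightarrow> 'a::euclidean_space"
  assumes "finite R"
  shows "closure {\<Sum>\<rho>\<in>R. t \<rho> *\<^sub>R g \<rho> | t. \<forall>\<rho>\<in>R. t \<rho> > 0}
    \<subseteq> {\<Sum>\<rho>\<in>R. t \<rho> *\<^sub>R g \<rho> | t. \<forall>\<rho>\<in>R. t \<rho> \<ge> 0}"
proof (rule closure_minimal)
  show "closed {\<Sum>\<rho>\<in>R. t \<rho> *\<^sub>R g \<rho> | t. \<forall>\<rho>\<in>R. t \<rho> \<ge> 0}"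
    using closed_convex_cone_hull[OF finite_imageI[OF assms], of g]
    by (simp add: convex_cone_hull_finite_image[OF assms])
qed (force simp: less_imp_le)

lemma interior_of_closure_positive_combinations:
  fixes g :: "'r \<Rightarrow> 'a::euclidean_space"
  assumes "finite R"
  defines "P \<equiv> {\<Sum>\<rho>\<in>R. t \<rho> *\<^sub>R g \<rho> | t. \<forall>\<rho>\<in>R. t \<rho> > 0}"
  shows "top_of_set (span (g ` R)) interior_of closure P = P"
proof
  show "P \<subseteq> top_of_set (span (g ` R)) interior_of closure P"
    by (rule interior_of_maximal[OF closure_subset]) (use openin_positive_combinations[OF assms(1)] in \<open>simp add: P_def\<close>)
next
  show "top_of_set (span (g ` R)) interior_of closure P \<subseteq> P"
  proof
    let ?C = "{\<Sum>\<rho>\<in>R. t \<rho> *\<^sub>R g \<rho> | t. \<forall>\<rho>\<in>R. t \<rho> \<ge> 0}"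
    fix x assume "x \<in> top_of_set (span (g ` R)) interior_of closure P"
    then obtain e where e: "e > 0" "\<forall>x'\<in>span (g ` R). dist x' x < e \<longrightarrow> x' \<in> closure P"
      and x: "x \<in> span (g ` R)"
      unfolding interior_of_def openin_euclidean_subtopology_iff by blast
    have "closure P \<subseteq> ?C" unfolding P_def by (rule closure_positive_combinations_subset[OF assms(1)])
    define w where "w = (\<Sum>\<rho>\<in>R. g \<rho>)"
    define \<delta> where "\<delta> = e / (2 * (norm w + 1))"
    have w1: "norm w + 1 > 0" using norm_ge_zero[of w] by linarith
    have \<delta>: "\<delta> > 0" using e(1) w1 by (simp add: \<delta>_def)
    have "\<delta> * norm w \<le> \<delta> * (norm w + 1)" using \<delta> by simp
    also have "\<dots> = e / 2" using w1 by (simp add: \<delta>_def field_simps)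
    also have "\<dots> < e" using e(1) by simp
    finally have "\<delta> * norm w < e" .
    have "w \<in> span (g ` R)" unfolding w_def by (intro span_sum span_base imageI)
    then have "x - \<delta> *\<^sub>R w \<in> span (g ` R)" using x by (simp add: span_diff span_scale)
    moreover have "dist (x - \<delta> *\<^sub>R w) x < e" using \<delta> \<open>\<delta> * norm w < e\<close> by (simp add: dist_norm)
    ultimately have "x - \<delta> *\<^sub>R w \<in> ?C" using e(2) \<open>closure P \<subseteq> ?C\<close> by blast
    then obtain t where t: "x - \<delta> *\<^sub>R w = (\<Sum>\<rho>\<in>R. t \<rho> *\<^sub>R g \<rho>)" "\<forall>\<rho>\<in>R. t \<rho> \<ge> 0" by blast
    have "x = (\<Sum>\<rho>\<in>R. (t \<rho> + \<delta>) *\<^sub>R g \<rho>)"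
      using t(1) by (simp add: scaleR_add_left sum.distrib w_def scaleR_sum_right algebra_simps)
    moreover have "\<forall>\<rho>\<in>R. t \<rho> + \<delta> > 0" using t(2) \<delta>(1) by (simp add: add_nonneg_pos)
    ultimately show "x \<in> P" unfolding P_def by (intro CollectI exI[of _ "\<lambda>\<rho>. t \<rho> + \<delta>"]) simp
  qed
qed

section \<open>Lie algebras and the Killing form\<close>

locale lie_alg =
  fixes br :: "'a::euclidean_space \<Rightarrow> 'a \<Rightarrow> 'a"
  assumes lie_algebra: "lie_algebra br"
begin

lemma bilinear_br: "bilinear br"
  using lie_algebra by (simp add: lie_algebra_def)

lemma linear_br_left: "linear (\<lambda>x. br x y)"
  using bilinear_br by (simp add: bilinear_def)

lemma linear_br_right: "linear (br x)"
  using bilinear_br by (simp add: bilinear_def)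

lemmas br_add_left = bilinear_ladd[OF bilinear_br]
  and br_add_right = bilinear_radd[OF bilinear_br]
  and br_scale_left = bilinear_lmul[OF bilinear_br]
  and br_scale_right = bilinear_rmul[OF bilinear_br]
  and br_diff_right = bilinear_rsub[OF bilinear_br]
  and br_zero_left [simp] = bilinear_lzero[OF bilinear_br]
  and br_zero_right [simp] = bilinear_rzero[OF bilinear_br]

lemma br_antisym: "br x y = - br y x"
proof -
  have "br (x + y) (x + y) = br x x + br x y + br y x + br y y"
    by (simp add: br_add_left br_add_right)
  then have "br x y + br y x = 0" using lie_algebra by (simp add: lie_algebra_def)
  then show ?thesis by (simp add: eq_neg_iff_add_eq_0)
qed

lemma br_jacobi: "br x (br y z) = br (br x y) z + br y (br x z)"
proof -
  have "br x (br y z) + br y (br z x) + br z (br x y) = 0"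
    using lie_algebra by (simp add: lie_algebra_def)
  moreover have "br y (br z x) = - br y (br x z)"
    by (metis br_antisym bilinear_rneg[OF bilinear_br])
  moreover have "br z (br x y) = - br (br x y) z" by (rule br_antisym)
  ultimately show ?thesis by (simp add: algebra_simps eq_neg_iff_add_eq_0)
qed

lemma linear_killing_left: "linear (\<lambda>x. killing br x y)"
  by (rule linearI)
    (simp_all add: killing_def ltrace_def br_add_left br_scale_left inner_add_left sum.distrib
      sum_distrib_left)

lemma linear_killing_right: "linear (killing br x)"
  by (rule linearI)
    (simp_all add: killing_def ltrace_def br_add_left br_scale_left inner_add_left sum.distrib
      sum_distrib_left linear_add[OF linear_br_right] linear_scale[OF linear_br_right])

lemma killing_invariant: "killing br (br x y) z = - killing br y (br x z)"
proof -
  let ?X = "br x" and ?Y = "br y" and ?Z = "br z"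
  have "killing br (br x y) z = ltrace (\<lambda>w. ?X (?Y (?Z w)) - ?Y (?X (?Z w)))"
    unfolding killing_def o_def by (metis br_jacobi add_diff_cancel_right')
  also have "\<dots> = ltrace (?X \<circ> (?Y \<circ> ?Z)) - ltrace (?Y \<circ> ?X \<circ> ?Z)"
    by (simp add: ltrace_diff o_def)
  also have "ltrace (?X \<circ> (?Y \<circ> ?Z)) = ltrace (?Y \<circ> ?Z \<circ> ?X)"
    by (rule ltrace_comp_commute) (auto intro: linear_compose linear_br_right)
  also have "ltrace (?Y \<circ> ?Z \<circ> ?X) - ltrace (?Y \<circ> ?X \<circ> ?Z)
      = - ltrace (\<lambda>w. ?Y (?X (?Z w)) - ?Y (?Z (?X w)))"
    by (simp add: ltrace_diff o_def)
  also have "(\<lambda>w. ?Y (?X (?Z w)) - ?Y (?Z (?X w))) = ?Y \<circ> br (br x z)"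
    by (auto simp: br_diff_right[symmetric] br_jacobi[of x z])
  finally show ?thesis by (simp add: killing_def o_def)
qed

lemma killing_pos_diagonalizable:
  assumes "semisimple br" "real_diagonalizable (br x)" "x \<noteq> 0"
  shows "killing br x x > 0"
proof -
  obtain y where "killing br x y \<noteq> 0" using assms(1,3) by (auto simp: semisimple_def)
  moreover have "killing br x y = 0" if "\<forall>v. br x v = 0"
    using that by (simp add: killing_def ltrace_def)
  ultimately obtain v where "br x v \<noteq> 0" by blast
  then show ?thesis
    unfolding killing_def by (rule ltrace_square_diagonalizable_pos[OF linear_br_right assms(2)])
qed

lemma killing_nondegenerate_on_split:
  assumes "semisimple br" "\<forall>x\<in>a. real_diagonalizable (br x)" "z \<in> a" "\<forall>t\<in>a. killing br z t = 0"
  shows "z = 0"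
  using killing_pos_diagonalizable[OF assms(1), of z] assms(2-4) by force

lemma dual_vec_restrict:
  assumes "semisimple br" "subspace a" "\<forall>x\<in>a. real_diagonalizable (br x)" "linear \<alpha>"
  shows "dual_vec br a (restrict \<alpha> a) \<in> a"
    and "\<forall>t\<in>a. killing br (dual_vec br a (restrict \<alpha> a)) t = \<alpha> t"
proof -
  have "\<exists>!s. s \<in> a \<and> (\<forall>t\<in>a. killing br s t = \<alpha> t)"
    using nondegenerate_form_represents[OF linear_killing_left linear_killing_right assms(2) _ assms(4)]
      killing_nondegenerate_on_split[OF assms(1,3)] by blast
  then have "\<exists>!s. s \<in> a \<and> (\<forall>t\<in>a. killing br s t = restrict \<alpha> a t)" by simp
  from theI'[OF this] show "dual_vec br a (restrict \<alpha> a) \<in> a"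
    and "\<forall>t\<in>a. killing br (dual_vec br a (restrict \<alpha> a)) t = \<alpha> t"
    unfolding dual_vec_def by auto
qed

lemma diagonalizable_nilpotent_ad_eq_0:
  assumes "semisimple br" "real_diagonalizable (br s)" "(br s ^^ n) = (\<lambda>_. 0)"
  shows "s = 0"
proof -
  have "br s v = 0" for v by (rule diagonalizable_nilpotent_eq_0[OF linear_br_right assms(2,3)])
  then have "killing br s y = 0" for y by (simp add: killing_def ltrace_def)
  then show ?thesis using assms(1) by (simp add: semisimple_def)
qed

lemma br_span_in_subspace:
  assumes "subspace S" "\<And>x y. x \<in> A \<Longrightarrow> y \<in> B \<Longrightarrow> br x y \<in> S" "x \<in> span A" "y \<in> span B"
  shows "br x y \<in> S"
proof -
  have "br x' y' \<in> S" if "x' \<in> span A" "y' \<in> B" for x' y'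
  proof -
    have "span A \<subseteq> (\<lambda>x. br x y') -` S"
      by (rule span_minimal) (use assms(2) that(2) linear_subspace_vimage[OF linear_br_left assms(1)] in auto)
    then show ?thesis using that(1) by auto
  qed
  then have "span B \<subseteq> br x -` S"
    by (intro span_minimal) (use assms(3) linear_subspace_vimage[OF linear_br_right assms(1)] in auto)
  then show ?thesis using assms(4) by auto
qed

lemma lie_ideal_contains_simple_factor:
  "lie_ideal br V \<Longrightarrow> V \<noteq> {0} \<Longrightarrow> \<exists>I. simple_factor br I \<and> I \<subseteq> V"
proof (induction "dim V" arbitrary: V rule: less_induct)
  case less
  show ?case
  proof (cases "simple_factor br V")
    case False
    then obtain J where J: "lie_ideal br J" "J \<subseteq> V" "J \<noteq> {0}" "J \<noteq> V"
      using less.prems by (auto simp: simple_factor_def)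
    have "subspace J" "subspace V" using J(1) less.prems(1) by (auto simp: lie_ideal_def)
    then have "span J \<subset> span V" using J(2,4) by (simp add: span_eq_iff[THEN iffD2] psubset_eq)
    then have "dim J < dim V" by (rule dim_psubset)
    then show ?thesis using less.hyps J by blast
  qed blast
qed

lemma split_toral_weight_vector:
  assumes "split_toral br a" "subspace W" "W \<noteq> {0}" "\<forall>t\<in>a. \<forall>w\<in>W. br t w \<in> W"
  obtains v \<alpha> where "v \<in> W" "v \<noteq> 0" "linear \<alpha>" "\<forall>t\<in>a. br t v = \<alpha> t *\<^sub>R v"
proof -
  have a: "subspace a" "\<And>x y. x \<in> a \<Longrightarrow> y \<in> a \<Longrightarrow> br x y = 0"
      "\<And>x. x \<in> a \<Longrightarrow> real_diagonalizable (br x)"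
    using assms(1) by (auto simp: split_toral_def)
  obtain B where B: "B \<subseteq> a" "independent B" "a \<subseteq> span B"
    using maximal_independent_subset[of a] by blast
  have "br x (br y z) = br y (br x z)" if "x \<in> a" "y \<in> a" for x y z
    using br_jacobi[of x y z] a(2)[OF that] by simp
  then have comm: "\<forall>g\<in>br ` B. \<forall>h\<in>br ` B. g \<circ> h = h \<circ> g"
    using B(1) by (auto simp: fun_eq_iff)
  have diag: "\<forall>g\<in>br ` B. linear g \<and> real_diagonalizable g"
    using B(1) a(3) linear_br_right by blast
  have inv: "\<forall>g\<in>br ` B. \<forall>w\<in>W. g w \<in> W" using B(1) assms(4) by blast
  have "finite (br ` B)" using independent_imp_finite[OF B(2)] by simp
  from commuting_diagonalizable_joint_eigenvector[OF this diag comm assms(2,3) inv]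
  obtain v where v: "v \<in> W" "v \<noteq> 0" "\<forall>b\<in>B. \<exists>c. br b v = c *\<^sub>R v" by blast
  define \<alpha> where "\<alpha> t = (br t v \<bullet> v) / (v \<bullet> v)" for t
  have \<alpha>: "linear \<alpha>"
    by (rule linearI) (simp_all add: \<alpha>_def br_add_left br_scale_left inner_add_left add_divide_distrib)
  have "subspace {t. br t v = \<alpha> t *\<^sub>R v}"
    by (auto simp: subspace_def br_add_left br_scale_left linear_add[OF \<alpha>] linear_scale[OF \<alpha>]
        linear_0[OF \<alpha>] scaleR_add_left)
  moreover have "B \<subseteq> {t. br t v = \<alpha> t *\<^sub>R v}"
    using v(2,3) by (auto simp: \<alpha>_def)
  ultimately have "a \<subseteq> {t. br t v = \<alpha> t *\<^sub>R v}" using B(3) span_minimal by blast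
  then show thesis using that v(1,2) \<alpha> by blast
qed

end

section \<open>The grading by a diagonalizable element\<close>

locale graded_lie = lie_alg br for br :: "'a::euclidean_space \<Rightarrow> 'a \<Rightarrow> 'a" +
  fixes X :: 'a
  assumes diagonalizable_ad_X: "real_diagonalizable (br X)"
begin

abbreviation E :: "real \<Rightarrow> 'a set" where "E \<equiv> eigenspace (br X)"

definition above :: "real \<Rightarrow> 'a set" where
  "above t = span (\<Union>c\<in>{t..}. E c)"

text \<open>The parabolic \<open>\<pp>\<close> defined by \<open>X\<close> is \<open>above 0\<close>; \<open>positive_part\<close> is \<open>\<uu>\<^sub>X\<close>.\<close>

definition positive_part :: "'a set" where
  "positive_part = span (\<Union>c\<in>{0<..}. E c)"

lemma subspace_E: "subspace (E c)"
  by (rule subspace_eigenspace[OF linear_br_right])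

lemma span_E: "span (\<Union>c. E c) = UNIV"
  by (rule span_eigenspaces_diagonalizable[OF diagonalizable_ad_X])

lemma br_E: "v \<in> E c \<Longrightarrow> w \<in> E d \<Longrightarrow> br v w \<in> E (c + d)"
  by (simp add: eigenspace_def br_jacobi[of X v w] br_scale_left br_scale_right scaleR_add_left)

lemma killing_E:
  assumes "v \<in> E c" "w \<in> E d" "c + d \<noteq> 0"
  shows "killing br v w = 0"
proof -
  have "c * killing br v w = - (d * killing br v w)"
    using killing_invariant[of X v w] assms(1,2)
    by (simp add: eigenspace_def linear_scale[OF linear_killing_left] linear_scale[OF linear_killing_right])
  then have "(c + d) * killing br v w = 0" by (simp add: algebra_simps)
  then show ?thesis using assms(3) by simp
qed

lemma br_span_E:
  assumes "\<And>c d. c \<in> C \<Longrightarrow> d \<in> D \<Longrightarrow> c + d \<in> S" "x \<in> span (\<Union>c\<in>C. E c)" "y \<in> span (\<Union>d\<in>D. E d)"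
  shows "br x y \<in> span (\<Union>c\<in>S. E c)"
proof (rule br_span_in_subspace[OF subspace_span _ assms(2,3)])
  fix v w assume v: "v \<in> (\<Union>c\<in>C. E c)" and w: "w \<in> (\<Union>d\<in>D. E d)"
  obtain c where c: "c \<in> C" "v \<in> E c" using v by (rule UN_E)
  obtain d where d: "d \<in> D" "w \<in> E d" using w by (rule UN_E)
  have "br v w \<in> E (c + d)" using c(2) d(2) by (rule br_E)
  moreover have "c + d \<in> S" using assms(1) c(1) d(1) .
  ultimately show "br v w \<in> span (\<Union>c\<in>S. E c)" by (intro span_base UN_I)
qed

lemma br_above: "x \<in> above s \<Longrightarrow> y \<in> above t \<Longrightarrow> br x y \<in> above (s + t)"
  unfolding above_def by (rule br_span_E) auto

lemma above_antimono: "s \<le> t \<Longrightarrow> above t \<subseteq> above s"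
  unfolding above_def by (intro span_mono UN_mono) auto

lemma above_trivial_bounds: obtains M where "above (- M) = UNIV" "above M = {0}"
proof -
  define L where "L = {c. E c \<noteq> {0}}"
  have "finite L" unfolding L_def by (rule finite_eigenvalues[OF linear_br_right])
  define M where "M = Max (insert 0 (abs ` L)) + 1"
  have M: "\<bar>c\<bar> < M" if "v \<in> E c" "v \<noteq> 0" for v c
  proof -
    have "\<bar>c\<bar> \<le> Max (insert 0 (abs ` L))" using \<open>finite L\<close> that by (intro Max_ge) (auto simp: L_def)
    then show ?thesis by (simp add: M_def)
  qed
  have "(\<Union>c. E c) \<subseteq> above (- M)"
  proof
    fix v assume "v \<in> (\<Union>c. E c)"
    then obtain c where c: "v \<in> E c" by blast
    show "v \<in> above (- M)"
    proof (cases "v = 0")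
      case False
      then have "c \<in> {- M..}" using M[OF c] by simp
      then show ?thesis using c unfolding above_def by (intro span_base UN_I)
    qed (simp add: above_def span_0)
  qed
  then have "above (- M) = UNIV"
    using span_E span_minimal[of "\<Union>c. E c" "above (- M)"] by (auto simp: above_def)
  moreover have "above M \<subseteq> {0}"
    unfolding above_def
  proof (rule span_minimal)
    show "(\<Union>c\<in>{M..}. E c) \<subseteq> {0}"
    proof
      fix v assume "v \<in> (\<Union>c\<in>{M..}. E c)"
      then obtain c where "c \<ge> M" "v \<in> E c" by blast
      then show "v \<in> {0}" using M[of v c] by (cases "v = 0") auto
    qed
  qed (rule subspace_single_0)
  then have "above M = {0}" by (auto simp: above_def span_0)
  ultimately show thesis using that by blast
qed

lemma nilpotent_above:
  assumes "\<delta> > 0" "y \<in> above \<delta>"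
  shows "\<exists>n. (br y ^^ n) = (\<lambda>_. 0)"
proof -
  obtain M where M: "above (- M) = UNIV" "above M = {0}" by (rule above_trivial_bounds)
  have iter: "(br y ^^ n) x \<in> above (- M + real n * \<delta>)" for n x
  proof (induction n)
    case 0 then show ?case using M(1) by simp
  next
    case (Suc n)
    have "br y ((br y ^^ n) x) \<in> above (\<delta> + (- M + real n * \<delta>))"
      by (rule br_above[OF assms(2) Suc.IH])
    then show ?case by (simp add: algebra_simps)
  qed
  obtain n :: nat where "real n \<ge> 2 * M / \<delta>" by (meson real_arch_simple)
  then have "- M + real n * \<delta> \<ge> M" using assms(1) by (simp add: field_simps)
  then have "(br y ^^ n) x = 0" for x using iter[of n x] above_antimono M(2) by blast
  then show ?thesis by blast
qed

lemma positive_part_in_above: obtains \<delta> where "\<delta> > 0" "positive_part \<subseteq> above \<delta>"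
proof -
  define P where "P = {c. c > 0 \<and> E c \<noteq> {0}}"
  have "finite P"
    using finite_eigenvalues[OF linear_br_right] by (rule rev_finite_subset) (auto simp: P_def)
  define \<delta> where "\<delta> = Min (insert 1 P)"
  have "\<delta> > 0" using \<open>finite P\<close> by (auto simp: \<delta>_def P_def)
  moreover have "(\<Union>c\<in>{0<..}. E c) \<subseteq> above \<delta>"
  proof
    fix v assume "v \<in> (\<Union>c\<in>{0<..}. E c)"
    then obtain c where c: "c > 0" "v \<in> E c" by blast
    show "v \<in> above \<delta>"
    proof (cases "v = 0")
      case False
      then have "c \<in> P" using c by (auto simp: P_def)
      then have "\<delta> \<le> c" unfolding \<delta>_def using \<open>finite P\<close> by (intro Min_le) auto
      then show ?thesis using c(2) unfolding above_def by (intro span_base) blast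
    qed (simp add: above_def span_0)
  qed
  then have "positive_part \<subseteq> above \<delta>"
    unfolding positive_part_def by (rule span_minimal) (simp add: above_def)
  ultimately show thesis using that by blast
qed

lemma nilpotent_positive_part: "y \<in> positive_part \<Longrightarrow> \<exists>n. (br y ^^ n) = (\<lambda>_. 0)"
  using positive_part_in_above nilpotent_above by blast

lemma br_above_0_positive_part: "t \<in> above 0 \<Longrightarrow> x \<in> positive_part \<Longrightarrow> br t x \<in> positive_part"
  unfolding above_def positive_part_def by (rule br_span_E) auto

lemma centralizes_positive_degrees:
  assumes "s0 \<in> E 0" "sp \<in> positive_part" "\<forall>x\<in>positive_part. br (s0 + sp) x = 0"
    and "d > 0" "x \<in> E d"
  shows "br s0 x = 0"
proof -
  obtain \<delta> where \<delta>: "\<delta> > 0" "positive_part \<subseteq> above \<delta>" by (rule positive_part_in_above)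
  have "x \<in> positive_part" unfolding positive_part_def using assms(4,5) by (intro span_base) blast
  then have "br s0 x = - br sp x" using assms(3) by (simp add: br_add_left eq_neg_iff_add_eq_0)
  moreover have "x \<in> above d" unfolding above_def using assms(5) by (intro span_base) blast
  then have "br sp x \<in> above (\<delta> + d)" using br_above assms(2) \<delta>(2) by blast
  ultimately have "br s0 x \<in> span (\<Union>c\<in>{\<delta> + d..}. E c)" by (simp add: above_def span_neg)
  moreover have "br s0 x \<in> E d" using br_E[OF assms(1,5)] by simp
  ultimately show ?thesis
    using eigenspace_inter_span_other_eigenspaces[OF linear_br_right] \<delta>(1) by fastforce
qed

lemma centralizes_negative_degrees:
  assumes "semisimple br" "s0 \<in> E 0" "\<And>d x. d > 0 \<Longrightarrow> x \<in> E d \<Longrightarrow> br s0 x = 0"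
    and "e < 0" "y \<in> E e"
  shows "br s0 y = 0"
proof -
  \<comment> \<open>The Killing form pairs \<open>E e\<close> only with \<open>E (- e)\<close>, on which \<open>s0\<close> acts trivially.\<close>
  have "killing br (br s0 y) z = 0" for z
  proof (rule linear_eq_0_on_span[OF linear_killing_right])
    show "z \<in> span (\<Union>c. E c)" using span_E by simp
  next
    fix w assume "w \<in> (\<Union>c. E c)"
    then obtain c where w: "w \<in> E c" by blast
    have "killing br (br s0 y) w = - killing br y (br s0 w)" by (rule killing_invariant)
    moreover have "killing br y (br s0 w) = 0"
    proof (cases "c = - e")
      case True
      then show ?thesis using assms(3)[OF _ w] assms(4) linear_0[OF linear_killing_right] by simp
    next
      case False
      then show ?thesis using killing_E[OF assms(5) br_E[OF assms(2) w]] by simp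
    qed
    ultimately show "killing br (br s0 y) w = 0" by simp
  qed
  then show ?thesis using assms(1) by (simp add: semisimple_def)
qed

lemma lie_ideal_degree_0_centralizer:
  "lie_ideal br {y \<in> E 0. \<forall>c x. c \<noteq> 0 \<longrightarrow> x \<in> E c \<longrightarrow> br y x = 0}" (is "lie_ideal br ?V")
proof -
  have V: "subspace ?V"
    unfolding subspace_def
    using subspace_0[OF subspace_E] subspace_add[OF subspace_E] subspace_scale[OF subspace_E]
    by (simp add: br_add_left br_scale_left)
  have "br w y \<in> ?V" if y: "y \<in> ?V" and w: "w \<in> E c" for w y c
  proof (cases "c = 0")
    case False
    then have "br y w = 0" using y w by blast
    then show ?thesis using subspace_0[OF V] br_antisym[of w y] by simp
  next
    case True
    have "br w y \<in> E 0" using br_E[OF w, of y 0] y True by simp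
    moreover have "br (br w y) z = 0" if "e \<noteq> 0" "z \<in> E e" for e z
    proof -
      have "br w z \<in> E e" using br_E[OF w that(2)] True by simp
      then show ?thesis using y that br_jacobi[of w y z] by auto
    qed
    ultimately show ?thesis by blast
  qed
  then have "br x y \<in> ?V" if "y \<in> ?V" for x y
    using span_minimal[OF _ linear_subspace_vimage[OF linear_br_left V], of "\<Union>c. E c" y] that span_E
    by blast
  with V show ?thesis by (simp add: lie_ideal_def)
qed

end

section \<open>Parabolic subalgebras\<close>

locale parabolic_setting = graded_lie br X for br :: "'a::euclidean_space \<Rightarrow> 'a \<Rightarrow> 'a" and X +
  fixes p a :: "'a set"
  assumes semisimple: "semisimple br"
    and p_eq: "p = span {v. \<exists>c\<ge>0. br X v = c *\<^sub>R v}"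
    and absolutely_proper: "absolutely_proper br p"
    and maximal_split_toral: "maximal_split_toral_in br p a"
begin

abbreviation roots :: "('a \<Rightarrow> real) set" where
  "roots \<equiv> roots_on br a (unipotent_radical br p)"

lemma split_toral_a: "split_toral br a" and a_subset_p: "a \<subseteq> p"
  using maximal_split_toral by (auto simp: maximal_split_toral_in_def)

lemma subspace_a: "subspace a" and diagonalizable_a: "\<forall>x\<in>a. real_diagonalizable (br x)"
  using split_toral_a by (auto simp: split_toral_def)

lemma p_eq_above: "p = above 0"
proof -
  have "{v. \<exists>c\<ge>0. br X v = c *\<^sub>R v} = (\<Union>c\<in>{0..}. E c)" by (auto simp: eigenspace_def)
  then show ?thesis by (simp add: p_eq above_def)
qed

lemma p_decomp:
  assumes "s \<in> p"
  obtains s0 sp where "s0 \<in> E 0" "sp \<in> positive_part" "s = s0 + sp"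
proof -
  have "(\<Union>c\<in>{0..}. E c) = E 0 \<union> (\<Union>c\<in>{0<..}. E c)" by (auto simp: order_le_less)
  then have "s \<in> span (E 0 \<union> (\<Union>c\<in>{0<..}. E c))" using assms by (simp add: p_eq_above above_def)
  then obtain x y where "s = x + y" "x \<in> span (E 0)" "y \<in> positive_part"
    unfolding span_Un positive_part_def by blast
  moreover have "span (E 0) = E 0" using subspace_E by (simp add: span_eq_iff)
  ultimately show thesis using that by blast
qed

lemma positive_part_subset_unipotent_radical: "positive_part \<subseteq> unipotent_radical br p"
proof -
  have "positive_part \<subseteq> p"
    unfolding p_eq_above above_def positive_part_def by (intro span_mono UN_mono) auto
  then have "positive_part \<in> {J. subspace J \<and> J \<subseteq> p \<and> (\<forall>x\<in>p. \<forall>y\<in>J. br x y \<in> J) \<and>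
      (\<forall>y\<in>J. \<exists>n. (br y ^^ n) = (\<lambda>_. 0))}"
    using br_above_0_positive_part nilpotent_positive_part
    by (auto simp: p_eq_above positive_part_def)
  then show ?thesis unfolding unipotent_radical_def by (intro order_trans[OF _ span_superset]) blast
qed

lemma lie_ideal_in_p_eq_0:
  assumes "lie_ideal br V" "V \<subseteq> p"
  shows "V = {0}"
proof (rule ccontr)
  \<comment> \<open>A simple factor contained in \<open>p\<close> is its own projection.\<close>
  assume "V \<noteq> {0}"
  then obtain I where I: "simple_factor br I" "I \<subseteq> V"
    using lie_ideal_contains_simple_factor assms(1) by blast
  have "projection_onto br p I"
    unfolding projection_onto_def killing_perp_def
    using I(2) assms(2) linear_0[OF linear_killing_left] by force
  then show False using absolutely_proper I(1) by (auto simp: absolutely_proper_def)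
qed

lemma centralizes_positive_part_if_roots_vanish:
  assumes s: "s \<in> a" "\<forall>\<rho>\<in>roots. \<rho> s = 0" and x: "x \<in> positive_part"
  shows "br s x = 0"
proof (rule ccontr)
  assume "br s x \<noteq> 0"
  have sp: "s \<in> above 0" using s(1) a_subset_p p_eq_above by blast
  obtain C vs where C: "finite C" "\<forall>c\<in>C. vs c \<in> eigenspace (br s) c" "x = sum vs C"
    using diagonalizable_sum_eigenvectors[OF linear_br_right] diagonalizable_a s(1) by metis
  have in_pos: "\<forall>c\<in>C. vs c \<in> positive_part"
    using eigenspace_components_in_invariant_subspace[OF C(1) linear_br_right _ _ C(2)]
      br_above_0_positive_part[OF sp] C(3) x by (simp add: positive_part_def)
  have "br s x = (\<Sum>c\<in>C. c *\<^sub>R vs c)"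
    using C(2,3) by (simp add: linear_sum[OF linear_br_right] eigenspace_def)
  then obtain c where c: "c \<in> C" "c *\<^sub>R vs c \<noteq> 0" using \<open>br s x \<noteq> 0\<close> by (metis sum.neutral)
  let ?W = "positive_part \<inter> eigenspace (br s) c"
  have "subspace ?W"
    using subspace_eigenspace[OF linear_br_right] by (simp add: positive_part_def subspace_inter)
  moreover have "?W \<noteq> {0}" using in_pos C(2) c by auto
  moreover have "br t w \<in> ?W" if t: "t \<in> a" and w: "w \<in> ?W" for t w
  proof -
    have "br s (br t w) = br t (br s w)"
      using br_jacobi[of s t w] split_toral_a s(1) t by (simp add: split_toral_def)
    then have "br t w \<in> eigenspace (br s) c"
      using w by (simp add: eigenspace_def br_scale_right)
    moreover have "t \<in> above 0" using t a_subset_p p_eq_above by blast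
    ultimately show ?thesis using br_above_0_positive_part w by blast
  qed
  ultimately obtain v \<alpha> where v: "v \<in> ?W" "v \<noteq> 0" "linear \<alpha>" "\<forall>t\<in>a. br t v = \<alpha> t *\<^sub>R v"
    using split_toral_weight_vector[OF split_toral_a] by metis
  have "\<alpha> s = c" using v(1,2,4) s(1) by (auto simp: eigenspace_def scaleR_cancel_right)
  moreover have "restrict \<alpha> a \<in> roots"
    unfolding roots_on_def using v positive_part_subset_unipotent_radical s(1) c \<open>\<alpha> s = c\<close> by fastforce
  ultimately show False using s c by auto
qed

lemma roots_vanish_imp_zero:
  assumes s: "s \<in> a" "\<forall>\<rho>\<in>roots. \<rho> s = 0"
  shows "s = 0"
proof -
  obtain s0 sp where dec: "s0 \<in> E 0" "sp \<in> positive_part" "s = s0 + sp"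
    using p_decomp a_subset_p s(1) by blast
  have pos: "br s0 x = 0" if "d > 0" "x \<in> E d" for d x
    using centralizes_positive_degrees[OF dec(1,2) _ that] centralizes_positive_part_if_roots_vanish[OF s]
      dec(3) by blast
  have "br s0 x = 0" if "c \<noteq> 0" "x \<in> E c" for c x
  proof (cases "c > 0")
    case False
    then have "c < 0" using that(1) by simp
    show ?thesis
      by (rule centralizes_negative_degrees[OF semisimple dec(1) _ \<open>c < 0\<close> that(2)]) (rule pos)
  qed (use pos that in blast)
  then have "s0 \<in> {y \<in> E 0. \<forall>c x. c \<noteq> 0 \<longrightarrow> x \<in> E c \<longrightarrow> br y x = 0}" using dec(1) by blast
  moreover have "{y \<in> E 0. \<forall>c x. c \<noteq> 0 \<longrightarrow> x \<in> E c \<longrightarrow> br y x = 0} \<subseteq> p"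
    unfolding p_eq_above above_def by (auto intro: span_base)
  ultimately have "s0 = 0" using lie_ideal_in_p_eq_0[OF lie_ideal_degree_0_centralizer] by blast
  then have "s \<in> positive_part" using dec by simp
  then obtain n where "(br s ^^ n) = (\<lambda>_. 0)" using nilpotent_positive_part by blast
  then show ?thesis
    using diagonalizable_nilpotent_ad_eq_0[OF semisimple] diagonalizable_a s(1) by blast
qed

lemma finite_roots: "finite roots"
proof (rule finite_weights[where G=br and A=a])
  show "\<exists>v. v \<noteq> 0 \<and> (\<forall>t\<in>a. br t v = \<rho> t *\<^sub>R v)" if "\<rho> \<in> roots" for \<rho>
    using that unfolding roots_on_def by auto
  show "\<exists>t\<in>a. \<rho> t \<noteq> \<sigma> t" if "\<rho> \<in> roots" "\<sigma> \<in> roots" "\<rho> \<noteq> \<sigma>" for \<rho> \<sigma>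
    using that unfolding roots_on_def by (auto simp: fun_eq_iff restrict_def split: if_splits)
qed (rule linear_br_right)

lemma dual_vec_root:
  assumes "\<rho> \<in> roots"
  shows "dual_vec br a \<rho> \<in> a" "\<forall>t\<in>a. killing br (dual_vec br a \<rho>) t = \<rho> t"
  using assms dual_vec_restrict[OF semisimple subspace_a diagonalizable_a] unfolding roots_on_def by auto

lemma span_dual_vec_roots: "span (dual_vec br a ` roots) = a"
proof
  show "span (dual_vec br a ` roots) \<subseteq> a"
    using dual_vec_root(1) by (intro span_minimal[OF _ subspace_a]) blast
  show "a \<subseteq> span (dual_vec br a ` roots)"
    using dual_vec_root roots_vanish_imp_zero
    by (intro span_of_separating_family[OF finite_roots linear_killing_left linear_killing_right subspace_a])
      auto
qed

end

theorem lemma2p2: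
  fixes br :: "'a::euclidean_space \<Rightarrow> 'a \<Rightarrow> 'a" and p a :: "'a set"
  assumes "semisimple br" and "no_compact_factors br"
    and "parabolic_subalgebra br p" and "absolutely_proper br p"
    and "maximal_split_toral_in br p a"
  shows "(top_of_set a) interior_of (closure (pos_cone br a (unipotent_radical br p)))
           = pos_cone br a (unipotent_radical br p)"
proof -
  obtain X where "real_diagonalizable (br X)" "p = span {v. \<exists>c\<ge>0. br X v = c *\<^sub>R v}"
    using assms(3) unfolding parabolic_subalgebra_def by blast
  then interpret parabolic_setting br X p a
    using assms by unfold_locales (auto simp: semisimple_def)
  show ?thesis
    using interior_of_closure_positive_combinations[OF finite_roots, of "dual_vec br a"]
    by (simp add: pos_cone_def span_dual_vec_roots)
qed

end
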